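(* Let $q\in[0,1)$ and $\Omega_n=\{\lambda \text{ partition}:\ell(\lambda)\le n\}$, with $\ell(\lambda)$ the number of nonzero parts. Define $\eta_n(\lambda)=\ell(\lambda)-n$ and $\phi_{n,x}(\lambda)=\prod_{0\le j<-x}q^{\lambda_{n-j}}$ for $x\in\mathbb R$ (empty product $=1$, $q^0=1$, and $q^{\lambda_{-m}}=0$ for $m\ge 0$). Then, for any probability measures on the $\Omega_n$, these satisfy conditions (1)–(4): (1) $0\le\phi_{n,x}\le\phi_{n,y}\le1$ for $x\le y$; (2) for every $\varepsilon>0$ there is $M$ with $\phi_{n,x}<\varepsilon$ whenever $\eta_n-x>M$, uniformly in $n,x$; (3) for every $\varepsilon>0$ there is $M$ with $\phi_{n,x}>1-\varepsilon$ whenever $\eta_n-x<-M$, uniformly in $n,x$; (4) there is $c>0$ independent of $n$ with $\phi_{n,x+1}-\phi_{n,x}\ge c$ whenever $x<\eta_n\le x+1$. Consequently $\{\ell(\lambda)-n\}_{n\ge1}$ and $\{F_n(x)=\mathbb E\prod_{0\le j<-x}q^{\lambda_{n-j}}\}_{n\ge1}$ are asymptotically equivalent as $n\to\infty$.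
   Context: A sequence $\{\eta_n\}_{n\ge1}$ of real random variables spreads if $\lim_{n\to\infty}\sup_{x\in\mathbb R}\mathrm{Prob}\{x<\eta_n\le x+1\}=0$. A sequence $\{F_n\}_{n\ge1}$ of non-decreasing functions $\mathbb R\to\mathbb R$ spreads if $\lim_{n\to\infty}\sup_{x\in\mathbb R}(F_n(x+1)-F_n(x))=0$. A sequence of real random variables $\{\eta_n\}$ and a sequence of non-decreasing functions $\{F_n\}$ are asymptotically equivalent if (i) $\{\eta_n\}$ spreads if and only if $\{F_n\}$ spreads, and (ii) when both spread, $\lim_{n\to\infty}\sup_{x\in\mathbb R}(\mathrm{Prob}\{\eta_n\le x\}-F_n(x))=0$. *)

theory Defs
  imports "HOL-Probability.Probability"
begin

text \<open>Partitions are represented as weakly decreasing lists of positive parts;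
  the length of the list is the number of nonzero parts.\<close>
definition is_partition :: "nat list \<Rightarrow> bool" where
  "is_partition lam \<longleftrightarrow> sorted_wrt (\<ge>) lam \<and> (\<forall>a\<in>set lam. 0 < a)"

definition Omega :: "nat \<Rightarrow> nat list set" where
  "Omega n = {lam. is_partition lam \<and> length lam \<le> n}"

text \<open>The i-th part (1-based); parts beyond the length are 0.\<close>
definition part :: "nat list \<Rightarrow> int \<Rightarrow> nat" where
  "part lam i = (if 1 \<le> i \<and> i \<le> int (length lam) then lam ! nat (i - 1) else 0)"

definition qfac :: "real \<Rightarrow> nat list \<Rightarrow> int \<Rightarrow> real" where
  "qfac q lam i = (if i \<le> 0 then 0 else q ^ part lam i)"

definition eta :: "nat \<Rightarrow> nat list \<Rightarrow> real" where
  "eta n lam = real (length lam) - real n"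

definition phi :: "real \<Rightarrow> nat \<Rightarrow> real \<Rightarrow> nat list \<Rightarrow> real" where
  "phi q n x lam = (\<Prod>j\<in>{j::nat. real j < - x}. qfac q lam (int n - int j))"

definition spreads_rv :: "(nat \<Rightarrow> 'a measure) \<Rightarrow> (nat \<Rightarrow> 'a \<Rightarrow> real) \<Rightarrow> bool" where
  "spreads_rv M eta' \<longleftrightarrow>
     (\<lambda>n. SUP x::real. measure (M n) {w \<in> space (M n). x < eta' n w \<and> eta' n w \<le> x + 1})
       \<longlonglongrightarrow> 0"

definition spreads_fun :: "(nat \<Rightarrow> real \<Rightarrow> real) \<Rightarrow> bool" where
  "spreads_fun F \<longleftrightarrow> (\<lambda>n. SUP x::real. F n (x + 1) - F n x) \<longlonglongrightarrow> 0"

definition asympt_equivalent ::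
  "(nat \<Rightarrow> 'a measure) \<Rightarrow> (nat \<Rightarrow> 'a \<Rightarrow> real) \<Rightarrow> (nat \<Rightarrow> real \<Rightarrow> real) \<Rightarrow> bool" where
  "asympt_equivalent M eta' F \<longleftrightarrow>
     (spreads_rv M eta' \<longleftrightarrow> spreads_fun F) \<and>
     (spreads_rv M eta' \<and> spreads_fun F \<longrightarrow>
        (\<lambda>n. SUP x::real. measure (M n) {w \<in> space (M n). eta' n w \<le> x} - F n x) \<longlonglongrightarrow> 0)"

end

theory Submission
  imports Defs
begin

text \<open>Each factor \<open>q ^ \<lambda>(n - j)\<close> is 1 beyond the last part of \<open>\<lambda>\<close> and at most \<open>q\<close> inside
  it, so \<open>phi q n x \<lambda>\<close> equals 1 once \<open>x \<ge> eta n \<lambda>\<close> and is at most \<open>q ^ \<lceil>eta n \<lambda> - x\<rceil>\<close>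
  below it; in particular it jumps by at least \<open>1 - q\<close> across the unit window containing
  \<open>eta n \<lambda>\<close>. For any kernel with such a jump and such tails, the largest unit increment of
  the expectation \<open>F n\<close> and the largest probability that \<open>eta n\<close> lies in a unit window bound
  each other linearly up to an arbitrarily small error: the jump gives one direction, the
  tails and a union bound over finitely many windows the other. The tails also show that
  \<open>Prob {eta n \<le> x}\<close> exceeds \<open>F n x\<close> by at most the mass of a bounded window, while far to
  the left both vanish, so the supremum of the difference is not negative in the limit.\<close>

lemma integrable_measure_pmf_if_bounded:
  fixes f :: "'a \<Rightarrow> real"
  assumes "\<forall>w\<in>set_pmf p. \<bar>f w\<bar> \<le> B"
  shows "integrable (measure_pmf p) f"
  using assms by (intro measure_pmf.integrable_const_bound[where B = B]) (auto simp: AE_measure_pmf_iff)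

lemma expectation_le_add_prob:
  fixes f :: "'a \<Rightarrow> real"
  assumes "integrable (measure_pmf p) f" and "\<forall>w\<in>set_pmf p. f w \<le> \<epsilon> + indicator A w"
  shows "measure_pmf.expectation p f \<le> \<epsilon> + measure_pmf.prob p A"
proof -
  have "integrable (measure_pmf p) (\<lambda>w. \<epsilon> + indicator A w :: real)"
    by (rule integrable_measure_pmf_if_bounded[where B = "\<bar>\<epsilon>\<bar> + 1"]) (simp add: indicator_def; arith)
  then have "measure_pmf.expectation p f \<le> measure_pmf.expectation p (\<lambda>w. \<epsilon> + indicator A w)"
    using assms by (intro integral_mono_AE) (auto simp: AE_measure_pmf_iff)
  also have "\<dots> = \<epsilon> + measure_pmf.prob p A"
    by (subst Bochner_Integration.integral_add) (auto intro: integrable_measure_pmf_if_bounded[where B = 1])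
  finally show ?thesis .
qed

lemma measure_pmf_prob_Ioc_le_mult:
  fixes e :: "'a \<Rightarrow> real"
  assumes "\<And>y. measure_pmf.prob p {w. y < e w \<and> e w \<le> y + 1} \<le> s"
  shows "measure_pmf.prob p {w. x < e w \<and> e w \<le> x + real K} \<le> real K * s"
proof (induction K)
  case 0
  have empty: "{w. x < e w \<and> e w \<le> x} = {}" by auto
  show ?case unfolding of_nat_0 add_0_right empty by simp
next
  case (Suc K)
  have "measure_pmf.prob p {w. x < e w \<and> e w \<le> x + real (Suc K)}
      \<le> measure_pmf.prob p ({w. x < e w \<and> e w \<le> x + real K} \<union> {w. x + real K < e w \<and> e w \<le> x + real K + 1})"
    by (intro measure_pmf.finite_measure_mono) auto
  also have "\<dots> \<le> measure_pmf.prob p {w. x < e w \<and> e w \<le> x + real K}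
                  + measure_pmf.prob p {w. x + real K < e w \<and> e w \<le> x + real K + 1}"
    by (rule measure_Un_le) auto
  also have "\<dots> \<le> real K * s + s"
    using Suc assms[of "x + real K"] by simp
  finally show ?case by (simp add: algebra_simps)
qed

lemma measure_pmf_prob_le_tendsto_at_bot:
  fixes e :: "'a \<Rightarrow> real"
  shows "((\<lambda>t. measure_pmf.prob p {w. e w \<le> t}) \<longlongrightarrow> 0) at_bot"
proof -
  interpret real_distribution "distr (measure_pmf p) borel e"
    by (rule prob_space.real_distribution_distr[OF prob_space_measure_pmf]) simp
  show ?thesis
    using cdf_lim_at_bot by (simp add: cdf_def measure_distr vimage_def Int_def)
qed

lemma LIMSEQ_zero_by_linear_bound:
  fixes g s :: "nat \<Rightarrow> real"
  assumes "s \<longlonglongrightarrow> 0"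
    and "\<And>\<epsilon>. \<epsilon> > 0 \<Longrightarrow> \<forall>\<^sub>F n in sequentially. - \<epsilon> \<le> g n"
    and "\<And>\<epsilon>. \<epsilon> > 0 \<Longrightarrow> \<exists>K. \<forall>\<^sub>F n in sequentially. g n \<le> \<epsilon> + K * s n"
  shows "g \<longlonglongrightarrow> 0"
proof (rule order_tendstoI)
  fix a :: real assume "a < 0"
  with assms(2)[of "- a / 2"] show "\<forall>\<^sub>F n in sequentially. a < g n"
    by (auto elim: eventually_mono)
next
  fix a :: real assume "0 < a"
  then obtain K where K: "\<forall>\<^sub>F n in sequentially. g n \<le> a / 2 + K * s n"
    using assms(3)[of "a / 2"] by auto
  have "(\<lambda>n. K * s n) \<longlonglongrightarrow> 0"
    using tendsto_mult_right_zero[OF assms(1)] by simp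
  then have "\<forall>\<^sub>F n in sequentially. K * s n < a / 2"
    using \<open>0 < a\<close> by (intro order_tendstoD(2)) auto
  with K show "\<forall>\<^sub>F n in sequentially. g n < a"
    by eventually_elim simp
qed

section \<open>Kernels with a uniform jump\<close>

locale spreading_kernel =
  fixes M :: "nat \<Rightarrow> 'a pmf" and e :: "nat \<Rightarrow> 'a \<Rightarrow> real"
    and phi :: "nat \<Rightarrow> real \<Rightarrow> 'a \<Rightarrow> real" and c :: real
  assumes c_pos: "0 < c"
    and phi_mono_bounded: "\<forall>\<^sub>F n in sequentially. \<forall>w\<in>set_pmf (M n). \<forall>x y. x \<le> y \<longrightarrow>
           0 \<le> phi n x w \<and> phi n x w \<le> phi n y w \<and> phi n y w \<le> 1"
    and phi_small: "\<epsilon> > 0 \<Longrightarrow> \<exists>K. \<forall>\<^sub>F n in sequentially. \<forall>w\<in>set_pmf (M n). \<forall>x.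
           e n w - x > K \<longrightarrow> phi n x w < \<epsilon>"
    and phi_large: "\<epsilon> > 0 \<Longrightarrow> \<exists>K. \<forall>\<^sub>F n in sequentially. \<forall>w\<in>set_pmf (M n). \<forall>x.
           e n w - x < - K \<longrightarrow> phi n x w > 1 - \<epsilon>"
    and phi_jump: "\<forall>\<^sub>F n in sequentially. \<forall>w\<in>set_pmf (M n). \<forall>x.
           x < e n w \<and> e n w \<le> x + 1 \<longrightarrow> c \<le> phi n (x + 1) w - phi n x w"
begin

definition F :: "nat \<Rightarrow> real \<Rightarrow> real" where
  "F n x = measure_pmf.expectation (M n) (phi n x)"

definition window_mass :: "nat \<Rightarrow> real" where
  "window_mass n = (SUP x. measure_pmf.prob (M n) {w. x < e n w \<and> e n w \<le> x + 1})"

definition max_increment :: "nat \<Rightarrow> real" where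
  "max_increment n = (SUP x. F n (x + 1) - F n x)"

definition cdf_excess :: "nat \<Rightarrow> real" where
  "cdf_excess n = (SUP x. measure_pmf.prob (M n) {w. e n w \<le> x} - F n x)"

lemma window_prob_le_window_mass:
  "measure_pmf.prob (M n) {w. x < e n w \<and> e n w \<le> x + 1} \<le> window_mass n"
  unfolding window_mass_def by (rule cSUP_upper) (auto intro: bdd_aboveI2[where M = 1])

lemma window_mass_nonneg: "0 \<le> window_mass n"
  using window_prob_le_window_mass[of n 0] measure_nonneg order_trans by blast

lemma eventually_phi_bounds:
  "\<forall>\<^sub>F n in sequentially. \<forall>w\<in>set_pmf (M n). \<forall>x. 0 \<le> phi n x w \<and> phi n x w \<le> 1"
  using phi_mono_bounded by eventually_elim blast

lemma eventually_phi_integrable: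
  "\<forall>\<^sub>F n in sequentially. \<forall>x. integrable (measure_pmf (M n)) (phi n x)"
  using eventually_phi_bounds
  by eventually_elim (auto intro!: integrable_measure_pmf_if_bounded[where B = 1])

lemma eventually_F_bounds:
  "\<forall>\<^sub>F n in sequentially. \<forall>x. 0 \<le> F n x \<and> F n x \<le> 1"
  using eventually_phi_bounds eventually_phi_integrable
proof eventually_elim
  case (elim n)
  show ?case
  proof
    fix x
    have "F n x \<le> measure_pmf.expectation (M n) (\<lambda>_. 1)"
      unfolding F_def using elim by (intro integral_mono_AE) (auto simp: AE_measure_pmf_iff)
    moreover have "0 \<le> F n x"
      unfolding F_def using elim by (intro integral_nonneg_AE) (auto simp: AE_measure_pmf_iff)
    ultimately show "0 \<le> F n x \<and> F n x \<le> 1" by simp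
  qed
qed

lemma eventually_F_mono: "\<forall>\<^sub>F n in sequentially. mono (F n)"
  using phi_mono_bounded eventually_phi_integrable
  by eventually_elim
    (auto intro!: monoI integral_mono_AE simp: F_def AE_measure_pmf_iff)

lemma eventually_increment_eq:
  "\<forall>\<^sub>F n in sequentially. \<forall>x. F n (x + 1) - F n x
     = measure_pmf.expectation (M n) (\<lambda>w. phi n (x + 1) w - phi n x w)"
  using eventually_phi_integrable by eventually_elim (simp add: F_def)

lemma eventually_cdf_gap_eq:
  "\<forall>\<^sub>F n in sequentially. \<forall>x. measure_pmf.prob (M n) {w. e n w \<le> x} - F n x
     = measure_pmf.expectation (M n) (\<lambda>w. indicator {w. e n w \<le> x} w - phi n x w)"
  using eventually_phi_integrable
  by eventually_elim
    (simp add: F_def Bochner_Integration.integral_diff integrable_measure_pmf_if_bounded[where B = 1])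

lemma increment_le_window:
  assumes "\<epsilon> > 0"
  obtains L and K :: nat where "\<forall>\<^sub>F n in sequentially. \<forall>w\<in>set_pmf (M n). \<forall>x.
    phi n (x + 1) w - phi n x w \<le> \<epsilon> + indicator {w. x - L < e n w \<and> e n w \<le> x - L + real K} w"
proof -
  obtain K1 where K1: "\<forall>\<^sub>F n in sequentially. \<forall>w\<in>set_pmf (M n). \<forall>x. e n w - x > K1 \<longrightarrow> phi n x w < \<epsilon>"
    using phi_small[OF assms] by blast
  obtain K2 where K2: "\<forall>\<^sub>F n in sequentially. \<forall>w\<in>set_pmf (M n). \<forall>x. e n w - x < - K2 \<longrightarrow> phi n x w > 1 - \<epsilon>"
    using phi_large[OF assms] by blast
  define L where "L = K2 + 1"
  define K where "K = nat \<lceil>L + 1 + K1\<rceil>"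
  have K: "L + 1 + K1 \<le> real K"
    unfolding K_def by linarith
  from K1 K2 eventually_phi_bounds
  have "\<forall>\<^sub>F n in sequentially. \<forall>w\<in>set_pmf (M n). \<forall>x.
    phi n (x + 1) w - phi n x w \<le> \<epsilon> + indicator {w. x - L < e n w \<and> e n w \<le> x - L + real K} w"
  proof eventually_elim
    case (elim n)
    show ?case
    proof (intro ballI allI)
      fix w x assume w: "w \<in> set_pmf (M n)"
      have "e n w \<le> x - L \<Longrightarrow> phi n x w > 1 - \<epsilon>"
        using elim w unfolding L_def by force
      moreover have "x - L + real K < e n w \<Longrightarrow> phi n (x + 1) w < \<epsilon>"
        using elim w K by force
      moreover have "0 \<le> phi n x w" "phi n (x + 1) w \<le> 1"
        using elim w by auto
      ultimately show "phi n (x + 1) w - phi n x w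
          \<le> \<epsilon> + indicator {w. x - L < e n w \<and> e n w \<le> x - L + real K} w"
        using assms unfolding indicator_def by (auto; linarith)
    qed
  qed
  then show ?thesis by (rule that)
qed

lemma cdf_gap_le_window:
  assumes "\<epsilon> > 0"
  obtains L and K :: nat where "\<forall>\<^sub>F n in sequentially. \<forall>w\<in>set_pmf (M n). \<forall>x.
    indicator {w. e n w \<le> x} w - phi n x w \<le> \<epsilon> + indicator {w. x - L < e n w \<and> e n w \<le> x - L + real K} w"
proof -
  obtain K2 where K2: "\<forall>\<^sub>F n in sequentially. \<forall>w\<in>set_pmf (M n). \<forall>x. e n w - x < - K2 \<longrightarrow> phi n x w > 1 - \<epsilon>"
    using phi_large[OF assms] by blast
  define L where "L = K2 + 1"
  define K where "K = nat \<lceil>L\<rceil>"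
  have K: "L \<le> real K"
    unfolding K_def by linarith
  from K2 eventually_phi_bounds
  have "\<forall>\<^sub>F n in sequentially. \<forall>w\<in>set_pmf (M n). \<forall>x.
    indicator {w. e n w \<le> x} w - phi n x w \<le> \<epsilon> + indicator {w. x - L < e n w \<and> e n w \<le> x - L + real K} w"
  proof eventually_elim
    case (elim n)
    show ?case
    proof (intro ballI allI)
      fix w x assume w: "w \<in> set_pmf (M n)"
      have "e n w \<le> x - L \<Longrightarrow> phi n x w > 1 - \<epsilon>"
        using elim w unfolding L_def by force
      moreover have "0 \<le> phi n x w"
        using elim w by auto
      ultimately show "indicator {w. e n w \<le> x} w - phi n x w
          \<le> \<epsilon> + indicator {w. x - L < e n w \<and> e n w \<le> x - L + real K} w"
        using assms K unfolding indicator_def by (auto; linarith)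
    qed
  qed
  then show ?thesis by (rule that)
qed

lemma phi_le_tail:
  assumes "\<epsilon> > 0"
  obtains K where "\<forall>\<^sub>F n in sequentially. \<forall>w\<in>set_pmf (M n). \<forall>x.
    phi n x w \<le> \<epsilon> + indicator {w. e n w \<le> x + K} w"
proof -
  obtain K where K: "\<forall>\<^sub>F n in sequentially. \<forall>w\<in>set_pmf (M n). \<forall>x. e n w - x > K \<longrightarrow> phi n x w < \<epsilon>"
    using phi_small[OF assms] by blast
  from K eventually_phi_bounds
  have "\<forall>\<^sub>F n in sequentially. \<forall>w\<in>set_pmf (M n). \<forall>x. phi n x w \<le> \<epsilon> + indicator {w. e n w \<le> x + K} w"
  proof eventually_elim
    case (elim n)
    show ?case
    proof (intro ballI allI)
      fix w x assume w: "w \<in> set_pmf (M n)"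
      have "e n w - x > K \<Longrightarrow> phi n x w < \<epsilon>" "phi n x w \<le> 1"
        using elim w by auto
      then show "phi n x w \<le> \<epsilon> + indicator {w. e n w \<le> x + K} w"
        using assms unfolding indicator_def by (auto; linarith)
    qed
  qed
  then show ?thesis by (rule that)
qed

lemma eventually_increment_bdd_above:
  "\<forall>\<^sub>F n in sequentially. bdd_above (range (\<lambda>x. F n (x + 1) - F n x))"
  using eventually_F_bounds
proof eventually_elim
  case (elim n)
  show ?case
    by (rule bdd_aboveI2[where M = 1]) (use elim in \<open>smt (verit)\<close>)
qed

lemma eventually_max_increment_nonneg: "\<forall>\<^sub>F n in sequentially. 0 \<le> max_increment n"
  using eventually_F_mono eventually_increment_bdd_above
proof eventually_elim
  case (elim n)
  have "0 \<le> F n (0 + 1) - F n 0"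
    using elim(1) by (simp add: mono_def)
  also have "\<dots> \<le> max_increment n"
    unfolding max_increment_def by (rule cSUP_upper[OF UNIV_I elim(2)])
  finally show ?case .
qed

lemma eventually_window_mass_le_max_increment:
  "\<forall>\<^sub>F n in sequentially. window_mass n \<le> 1 / c * max_increment n"
  using phi_jump phi_mono_bounded eventually_phi_integrable eventually_increment_eq
    eventually_increment_bdd_above
proof eventually_elim
  case (elim n)
  have "window_mass n \<le> max_increment n / c"
    unfolding window_mass_def
  proof (rule cSUP_least)
    fix x
    let ?I = "{w. x < e n w \<and> e n w \<le> x + 1}"
    have "c * measure_pmf.prob (M n) ?I = measure_pmf.expectation (M n) (\<lambda>w. c * indicator ?I w)"
      by simp
    also have "\<dots> \<le> measure_pmf.expectation (M n) (\<lambda>w. phi n (x + 1) w - phi n x w)"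
    proof (intro integral_mono_AE)
      show "integrable (measure_pmf (M n)) (\<lambda>w. c * indicator ?I w)"
        by (rule integrable_measure_pmf_if_bounded[where B = c]) (use c_pos in \<open>simp add: indicator_def\<close>)
      show "integrable (measure_pmf (M n)) (\<lambda>w. phi n (x + 1) w - phi n x w)"
        using elim(3) by simp
      show "AE w in measure_pmf (M n). c * indicator ?I w \<le> phi n (x + 1) w - phi n x w"
        unfolding AE_measure_pmf_iff using elim(1,2)
        by (auto simp: indicator_def dest!: bspec spec[of _ x] spec[of _ "x + 1"])
    qed
    also have "\<dots> = F n (x + 1) - F n x"
      using elim(4) by simp
    also have "\<dots> \<le> max_increment n"
      unfolding max_increment_def by (rule cSUP_upper[OF UNIV_I elim(5)])
    finally show "measure_pmf.prob (M n) ?I \<le> max_increment n / c"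
      using c_pos by (simp add: field_simps mult.commute)
  qed simp
  then show ?case
    by simp
qed

lemma max_increment_le_window_mass:
  assumes "\<epsilon> > 0"
  shows "\<exists>K. \<forall>\<^sub>F n in sequentially. max_increment n \<le> \<epsilon> + K * window_mass n"
proof -
  obtain L and K :: nat where LK: "\<forall>\<^sub>F n in sequentially. \<forall>w\<in>set_pmf (M n). \<forall>x.
    phi n (x + 1) w - phi n x w \<le> \<epsilon> + indicator {w. x - L < e n w \<and> e n w \<le> x - L + real K} w"
    using increment_le_window[OF assms] .
  from LK eventually_phi_integrable eventually_increment_eq
  have "\<forall>\<^sub>F n in sequentially. max_increment n \<le> \<epsilon> + real K * window_mass n"
  proof eventually_elim
    case (elim n)
    show ?case
      unfolding max_increment_def
    proof (rule cSUP_least)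
      fix x
      have "F n (x + 1) - F n x
          \<le> \<epsilon> + measure_pmf.prob (M n) {w. x - L < e n w \<and> e n w \<le> x - L + real K}"
        unfolding elim(3)[rule_format] using elim(1,2) by (intro expectation_le_add_prob) auto
      also have "\<dots> \<le> \<epsilon> + real K * window_mass n"
        using measure_pmf_prob_Ioc_le_mult[OF window_prob_le_window_mass] by simp
      finally show "F n (x + 1) - F n x \<le> \<epsilon> + real K * window_mass n" .
    qed simp
  qed
  then show ?thesis by blast
qed

lemma cdf_excess_le_window_mass:
  assumes "\<epsilon> > 0"
  shows "\<exists>K. \<forall>\<^sub>F n in sequentially. cdf_excess n \<le> \<epsilon> + K * window_mass n"
proof -
  obtain L and K :: nat where LK: "\<forall>\<^sub>F n in sequentially. \<forall>w\<in>set_pmf (M n). \<forall>x.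
    indicator {w. e n w \<le> x} w - phi n x w \<le> \<epsilon> + indicator {w. x - L < e n w \<and> e n w \<le> x - L + real K} w"
    using cdf_gap_le_window[OF assms] .
  from LK eventually_phi_integrable eventually_cdf_gap_eq
  have "\<forall>\<^sub>F n in sequentially. cdf_excess n \<le> \<epsilon> + real K * window_mass n"
  proof eventually_elim
    case (elim n)
    show ?case
      unfolding cdf_excess_def
    proof (rule cSUP_least)
      fix x
      have "integrable (measure_pmf (M n)) (indicator {w. e n w \<le> x} :: 'a \<Rightarrow> real)"
        by (rule integrable_measure_pmf_if_bounded[where B = 1]) (simp add: indicator_def)
      then have "measure_pmf.prob (M n) {w. e n w \<le> x} - F n x
          \<le> \<epsilon> + measure_pmf.prob (M n) {w. x - L < e n w \<and> e n w \<le> x - L + real K}"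
        unfolding elim(3)[rule_format] using elim(1,2) by (intro expectation_le_add_prob) auto
      also have "\<dots> \<le> \<epsilon> + real K * window_mass n"
        using measure_pmf_prob_Ioc_le_mult[OF window_prob_le_window_mass] by simp
      finally show "measure_pmf.prob (M n) {w. e n w \<le> x} - F n x \<le> \<epsilon> + real K * window_mass n" .
    qed simp
  qed
  then show ?thesis by blast
qed

lemma eventually_cdf_excess_ge:
  assumes "\<epsilon> > 0"
  shows "\<forall>\<^sub>F n in sequentially. - \<epsilon> \<le> cdf_excess n"
proof -
  obtain K where K: "\<forall>\<^sub>F n in sequentially. \<forall>w\<in>set_pmf (M n). \<forall>x.
    phi n x w \<le> \<epsilon> / 2 + indicator {w. e n w \<le> x + K} w"
    using phi_le_tail[of "\<epsilon> / 2"] assms by auto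
  from K eventually_phi_integrable eventually_F_bounds
  show ?thesis
  proof eventually_elim
    case (elim n)
    let ?h = "\<lambda>x. measure_pmf.prob (M n) {w. e n w \<le> x} - F n x"
    have "\<forall>\<^sub>F t in at_bot. measure_pmf.prob (M n) {w. e n w \<le> t} < \<epsilon> / 2"
      using assms by (intro order_tendstoD(2)[OF measure_pmf_prob_le_tendsto_at_bot]) auto
    then obtain t where t: "measure_pmf.prob (M n) {w. e n w \<le> t} < \<epsilon> / 2"
      unfolding eventually_at_bot_linorder by blast
    have "\<forall>w\<in>set_pmf (M n). phi n (t - K) w \<le> \<epsilon> / 2 + indicator {w. e n w \<le> t - K + K} w"
      using elim(1) by blast
    then have "\<forall>w\<in>set_pmf (M n). phi n (t - K) w \<le> \<epsilon> / 2 + indicator {w. e n w \<le> t} w"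
      by simp
    then have "F n (t - K) \<le> \<epsilon> / 2 + measure_pmf.prob (M n) {w. e n w \<le> t}"
      unfolding F_def using elim(2) by (intro expectation_le_add_prob) auto
    moreover have "0 \<le> measure_pmf.prob (M n) {w. e n w \<le> t - K}"
      by simp
    ultimately have "- \<epsilon> \<le> ?h (t - K)"
      using t by linarith
    also have "\<dots> \<le> cdf_excess n"
    proof -
      have h_le: "?h x \<le> 1" for x
      proof -
        have "0 \<le> F n x" using elim(3) by blast
        moreover have "measure_pmf.prob (M n) {w. e n w \<le> x} \<le> 1" by (rule measure_pmf.prob_le_1)
        ultimately show ?thesis by linarith
      qed
      show ?thesis
        unfolding cdf_excess_def by (rule cSUP_upper[OF UNIV_I bdd_aboveI2[where M = 1]]) (rule h_le)
    qed
    finally show ?case .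
  qed
qed

theorem asympt_equivalent_expectation:
  "asympt_equivalent (\<lambda>n. measure_pmf (M n)) e (\<lambda>n x. measure_pmf.expectation (M n) (phi n x))"
proof -
  have spreads_rv: "spreads_rv (\<lambda>n. measure_pmf (M n)) e \<longleftrightarrow> window_mass \<longlonglongrightarrow> 0"
    by (simp add: spreads_rv_def window_mass_def[abs_def])
  have spreads_fun: "spreads_fun (\<lambda>n x. measure_pmf.expectation (M n) (phi n x)) \<longleftrightarrow> max_increment \<longlonglongrightarrow> 0"
    by (simp add: spreads_fun_def max_increment_def[abs_def] F_def)
  have "window_mass \<longlonglongrightarrow> 0" if "max_increment \<longlonglongrightarrow> 0"
  proof (rule LIMSEQ_zero_by_linear_bound[OF that])
    show "\<forall>\<^sub>F n in sequentially. - \<epsilon> \<le> window_mass n" if "\<epsilon> > 0" for \<epsilon> :: real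
      using that window_mass_nonneg by (intro always_eventually) (auto intro: order_trans[of _ 0])
    show "\<exists>K. \<forall>\<^sub>F n in sequentially. window_mass n \<le> \<epsilon> + K * max_increment n" if "\<epsilon> > 0" for \<epsilon> :: real
    proof (intro exI[of _ "1 / c"])
      from eventually_window_mass_le_max_increment
      show "\<forall>\<^sub>F n in sequentially. window_mass n \<le> \<epsilon> + 1 / c * max_increment n"
      proof eventually_elim
        case (elim n)
        then show ?case using that by linarith
      qed
    qed
  qed
  moreover have "max_increment \<longlonglongrightarrow> 0" if "window_mass \<longlonglongrightarrow> 0"
  proof (rule LIMSEQ_zero_by_linear_bound[OF that])
    show "\<forall>\<^sub>F n in sequentially. - \<epsilon> \<le> max_increment n" if "\<epsilon> > 0" for \<epsilon> :: real
      using eventually_max_increment_nonneg by eventually_elim (use that in linarith)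
  qed (rule max_increment_le_window_mass)
  moreover have "cdf_excess \<longlonglongrightarrow> 0" if "window_mass \<longlonglongrightarrow> 0"
    using that eventually_cdf_excess_ge cdf_excess_le_window_mass by (rule LIMSEQ_zero_by_linear_bound)
  ultimately show ?thesis
    unfolding asympt_equivalent_def spreads_rv spreads_fun
    by (auto simp: cdf_excess_def[abs_def] F_def)
qed

end

section \<open>The partition kernel\<close>

lemma qfac_bounds:
  assumes "0 \<le> q" "q \<le> 1"
  shows "0 \<le> qfac q lam i \<and> qfac q lam i \<le> 1"
  using assms by (auto simp: qfac_def power_le_one)

lemma phi_eq_prod_lessThan: "phi q n x lam = (\<Prod>j<nat \<lceil>-x\<rceil>. qfac q lam (int n - int j))"
proof -
  have "{j::nat. real j < - x} = {..<nat \<lceil>-x\<rceil>}"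
    by (auto simp: zless_nat_eq_int_zless less_ceiling_iff)
  then show ?thesis
    unfolding phi_def by simp
qed

lemma phi_bounds:
  assumes "0 \<le> q" "q \<le> 1"
  shows "0 \<le> phi q n x lam \<and> phi q n x lam \<le> 1"
  unfolding phi_eq_prod_lessThan using qfac_bounds[OF assms]
  by (auto intro: prod_nonneg prod_le_1)

lemma phi_mono:
  assumes "0 \<le> q" "q \<le> 1" "x \<le> y"
  shows "phi q n x lam \<le> phi q n y lam"
proof -
  let ?f = "\<lambda>j. qfac q lam (int n - int j)"
  have "nat \<lceil>-y\<rceil> \<le> nat \<lceil>-x\<rceil>"
    using assms(3) by (intro nat_mono ceiling_mono) simp
  then have sub: "{..<nat \<lceil>-y\<rceil>} \<subseteq> {..<nat \<lceil>-x\<rceil>}"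
    by auto
  have "prod ?f {..<nat \<lceil>-x\<rceil>} = prod ?f ({..<nat \<lceil>-x\<rceil>} - {..<nat \<lceil>-y\<rceil>}) * prod ?f {..<nat \<lceil>-y\<rceil>}"
    by (rule prod.subset_diff[OF sub]) simp
  also have "\<dots> \<le> prod ?f {..<nat \<lceil>-y\<rceil>}"
    using qfac_bounds[OF assms(1,2)]
    by (intro mult_left_le_one_le prod_nonneg prod_le_1) auto
  finally show ?thesis
    unfolding phi_eq_prod_lessThan .
qed

lemma mono_expectation_phi:
  assumes "0 \<le> q" "q \<le> 1"
  shows "mono (\<lambda>x. measure_pmf.expectation p (phi q n x))"
  using phi_mono[OF assms] phi_bounds[OF assms]
  by (auto intro!: monoI integral_mono integrable_measure_pmf_if_bounded[where B = 1])

lemma phi_eq_1_if_eta_le: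
  assumes "length lam \<le> n" "eta n lam \<le> x"
  shows "phi q n x lam = 1"
  unfolding phi_eq_prod_lessThan
proof (rule prod.neutral, intro ballI)
  fix j assume "j \<in> {..<nat \<lceil>-x\<rceil>}"
  then have "real j < -x"
    by (simp add: zless_nat_eq_int_zless less_ceiling_iff)
  with assms have "int n - int j > int (length lam)"
    by (simp add: eta_def)
  then show "qfac q lam (int n - int j) = 1"
    by (simp add: qfac_def part_def)
qed

lemma phi_le_power_ceiling:
  assumes "0 \<le> q" "q \<le> 1" "lam \<in> Omega n"
  shows "phi q n x lam \<le> q ^ nat \<lceil>eta n lam - x\<rceil>"
proof -
  let ?f = "\<lambda>j. qfac q lam (int n - int j)"
  define l where "l = length lam"
  define N where "N = nat \<lceil>-x\<rceil>"
  define B where "B = {n - l..<N}"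
  have l: "l \<le> n" "is_partition lam"
    using assms(3) by (auto simp: Omega_def l_def)
  have sub: "B \<subseteq> {..<N}"
    by (auto simp: B_def)
  have factor_le_q: "?f j \<le> q" if "j \<in> B" for j
  proof (cases "int n - int j \<le> 0")
    case True
    then show ?thesis using assms by (simp add: qfac_def)
  next
    case False
    have "int n - int j \<le> int l"
      using that l by (auto simp: B_def)
    then have "0 < part lam (int n - int j)"
      using False l(2) unfolding part_def is_partition_def l_def
      by (auto intro!: bspec[of _ _ "lam ! nat (int n - int j - 1)"])
    then have "q ^ part lam (int n - int j) \<le> q ^ 1"
      using assms by (intro power_decreasing) auto
    then show ?thesis
      using False by (simp add: qfac_def)
  qed
  have "prod ?f {..<N} = prod ?f ({..<N} - B) * prod ?f B"
    by (rule prod.subset_diff[OF sub]) simp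
  also have "\<dots> \<le> prod ?f B"
    using qfac_bounds[OF assms(1,2)]
    by (intro mult_left_le_one_le prod_nonneg prod_le_1) auto
  also have "\<dots> \<le> q ^ card B"
    using qfac_bounds[OF assms(1,2)] factor_le_q prod_mono[of B ?f "\<lambda>_. q"] by simp
  also have "card B = nat \<lceil>eta n lam - x\<rceil>"
  proof -
    have "\<lceil>eta n lam - x\<rceil> = \<lceil>-x + of_int (int l - int n)\<rceil>"
      by (simp add: eta_def l_def algebra_simps)
    also have "\<dots> = \<lceil>-x\<rceil> + (int l - int n)"
      by (rule ceiling_add_of_int)
    finally show ?thesis
      using l(1) by (simp add: B_def N_def)
  qed
  finally show ?thesis
    unfolding phi_eq_prod_lessThan N_def .
qed

lemma phi_uniformly_small:
  assumes "0 \<le> q" "q < 1"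
  shows "\<forall>\<epsilon>>0. \<exists>M. \<forall>n. \<forall>lam\<in>Omega n. \<forall>x. eta n lam - x > M \<longrightarrow> phi q n x lam < \<epsilon>"
proof (intro allI impI)
  fix \<epsilon> :: real assume "\<epsilon> > 0"
  then obtain K where K: "q ^ K < \<epsilon>"
    using real_arch_pow_inv assms(2) by blast
  have "phi q n x lam < \<epsilon>" if "lam \<in> Omega n" "real K < eta n lam - x" for n lam x
  proof -
    have "K \<le> nat \<lceil>eta n lam - x\<rceil>"
      using that(2) by linarith
    then have "q ^ nat \<lceil>eta n lam - x\<rceil> \<le> q ^ K"
      using assms by (intro power_decreasing) auto
    then show ?thesis
      using phi_le_power_ceiling[OF assms(1) _ that(1), of x] assms(2) K by linarith
  qed
  then show "\<exists>M. \<forall>n. \<forall>lam\<in>Omega n. \<forall>x. eta n lam - x > M \<longrightarrow> phi q n x lam < \<epsilon>"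
    by blast
qed

lemma phi_uniformly_large:
  "\<forall>\<epsilon>>0. \<exists>M. \<forall>n. \<forall>lam\<in>Omega n. \<forall>x. eta n lam - x < - M \<longrightarrow> phi q n x lam > 1 - \<epsilon>"
  by (auto simp: Omega_def phi_eq_1_if_eta_le intro!: exI[of _ 0])

lemma phi_jump_ge:
  assumes "0 \<le> q" "q < 1" "lam \<in> Omega n" "x < eta n lam" "eta n lam \<le> x + 1"
  shows "1 - q \<le> phi q n (x + 1) lam - phi q n x lam"
proof -
  have "phi q n (x + 1) lam = 1"
    using assms(3,5) by (intro phi_eq_1_if_eta_le) (auto simp: Omega_def)
  moreover have "\<lceil>eta n lam - x\<rceil> = 1"
    using assms(4,5) by (simp add: ceiling_eq_iff)
  then have "phi q n x lam \<le> q"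
    using phi_le_power_ceiling[OF assms(1) _ assms(3), of x] assms(2) by simp
  ultimately show ?thesis
    by simp
qed

lemma spreading_kernel_partitions:
  assumes "0 \<le> q" "q < 1" "\<forall>n\<ge>1. set_pmf (P n) \<subseteq> Omega n"
  shows "spreading_kernel P eta (phi q) (1 - q)"
proof -
  have q: "q \<le> 1"
    using assms(2) by simp
  have on_support: "\<forall>\<^sub>F n in sequentially. \<forall>w\<in>set_pmf (P n). Q n w"
    if "\<forall>n. \<forall>lam\<in>Omega n. Q n lam" for Q
    using that assms(3) unfolding eventually_sequentially by blast
  show ?thesis
  proof
    show "0 < 1 - q"
      using assms(2) by simp
    have "\<forall>n. \<forall>lam\<in>Omega n. \<forall>x y. x \<le> y \<longrightarrow>
        0 \<le> phi q n x lam \<and> phi q n x lam \<le> phi q n y lam \<and> phi q n y lam \<le> 1"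
      using phi_bounds[OF assms(1) q] phi_mono[OF assms(1) q] by blast
    from on_support[OF this]
    show "\<forall>\<^sub>F n in sequentially. \<forall>w\<in>set_pmf (P n). \<forall>x y. x \<le> y \<longrightarrow>
        0 \<le> phi q n x w \<and> phi q n x w \<le> phi q n y w \<and> phi q n y w \<le> 1" .
    show "\<exists>K. \<forall>\<^sub>F n in sequentially. \<forall>w\<in>set_pmf (P n). \<forall>x. eta n w - x > K \<longrightarrow> phi q n x w < \<epsilon>"
      if \<epsilon>: "\<epsilon> > 0" for \<epsilon>
    proof -
      obtain K where "\<forall>n. \<forall>lam\<in>Omega n. \<forall>x. eta n lam - x > K \<longrightarrow> phi q n x lam < \<epsilon>"
        using phi_uniformly_small[OF assms(1,2)] \<epsilon> by blast
      from on_support[OF this] show ?thesis by blast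
    qed
    show "\<exists>K. \<forall>\<^sub>F n in sequentially. \<forall>w\<in>set_pmf (P n). \<forall>x. eta n w - x < - K \<longrightarrow> phi q n x w > 1 - \<epsilon>"
      if \<epsilon>: "\<epsilon> > 0" for \<epsilon>
    proof -
      obtain K where "\<forall>n. \<forall>lam\<in>Omega n. \<forall>x. eta n lam - x < - K \<longrightarrow> phi q n x lam > 1 - \<epsilon>"
        using phi_uniformly_large \<epsilon> by blast
      from on_support[OF this] show ?thesis by blast
    qed
    have "\<forall>n. \<forall>lam\<in>Omega n. \<forall>x. x < eta n lam \<and> eta n lam \<le> x + 1 \<longrightarrow>
        1 - q \<le> phi q n (x + 1) lam - phi q n x lam"
      using phi_jump_ge[OF assms(1,2)] by blast
    from on_support[OF this]
    show "\<forall>\<^sub>F n in sequentially. \<forall>w\<in>set_pmf (P n). \<forall>x. x < eta n w \<and> eta n w \<le> x + 1 \<longrightarrow>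
        1 - q \<le> phi q n (x + 1) w - phi q n x w" .
  qed
qed

theorem proposition5p8:
  fixes q :: real and P :: "nat \<Rightarrow> nat list pmf"
  assumes "0 \<le> q" and "q < 1"
    and "\<forall>n\<ge>1. set_pmf (P n) \<subseteq> Omega n"
  shows "(\<forall>n\<ge>1. \<forall>lam\<in>Omega n. \<forall>x y. x \<le> y \<longrightarrow>
            0 \<le> phi q n x lam \<and> phi q n x lam \<le> phi q n y lam \<and> phi q n y lam \<le> 1)
    \<and> (\<forall>\<epsilon>>0. \<exists>M. \<forall>n\<ge>1. \<forall>lam\<in>Omega n. \<forall>x.
            eta n lam - x > M \<longrightarrow> phi q n x lam < \<epsilon>)
    \<and> (\<forall>\<epsilon>>0. \<exists>M. \<forall>n\<ge>1. \<forall>lam\<in>Omega n. \<forall>x.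
            eta n lam - x < - M \<longrightarrow> phi q n x lam > 1 - \<epsilon>)
    \<and> (\<exists>c>0. \<forall>n\<ge>1. \<forall>lam\<in>Omega n. \<forall>x.
            x < eta n lam \<and> eta n lam \<le> x + 1 \<longrightarrow> phi q n (x + 1) lam - phi q n x lam \<ge> c)
    \<and> (\<forall>n\<ge>1. mono (\<lambda>x. measure_pmf.expectation (P n) (phi q n x)))
    \<and> asympt_equivalent (\<lambda>n. measure_pmf (P n)) eta
        (\<lambda>n x. measure_pmf.expectation (P n) (phi q n x))"
proof -
  have q: "q \<le> 1"
    using assms(2) by simp
  show ?thesis
    apply (intro conjI exI[of _ "1 - q"])
    subgoal using phi_bounds[OF assms(1) q] phi_mono[OF assms(1) q] by blast
    subgoal using phi_uniformly_small[OF assms(1,2)] by blast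
    subgoal using phi_uniformly_large by blast
    subgoal using assms(2) by simp
    subgoal using phi_jump_ge[OF assms(1,2)] by blast
    subgoal using mono_expectation_phi[OF assms(1) q] by blast
    subgoal by (rule spreading_kernel.asympt_equivalent_expectation[OF spreading_kernel_partitions[OF assms]])
    done
qed

end
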